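(* Let $f(z)=\sum_{n=0}^{\infty}a_{n}z^{n}$ be an entire function with $a_{0}\cdot a_{n}>0$ for all $n\ge0$, of order $\rho(f)=\limsup_{n\to\infty}\frac{n\log n}{-\log|a_{n}|}<1$, having a nonzero root, and write $\frac{f(z)}{f(0)}=\prod_{n=1}^{\infty}\left(1+\frac{z}{\lambda_{n}}\right)$ with $\sum_{n}1/|\lambda_n|<\infty$, where $\{-\lambda_n\}$ are the zeros of $f$ with multiplicity. Assume there exists $\beta_{0}\in(0,1)$ with $\Re(\lambda_{n})\ge\beta_{0}|\lambda_{n}|>0$ for all $n\in\mathbb{N}$, and let $\Theta(t)=\sum_{n=1}^{\infty}e^{-\lambda_{n}t}$ for $t>0$. Then the sequence $\{\lambda_{n}\}_{n=1}^{\infty}$ is positive (all $\lambda_n>0$) if and only if $\Theta$ is completely monotonic on $(0,\infty)$.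
   Context: A function $g\in C^\infty(0,\infty)$ is completely monotonic on $(0,\infty)$ if $(-1)^{k}g^{(k)}(x)\ge 0$ for all $x>0$ and all $k\in\mathbb{N}_0$. *)

theory Defs
  imports "HOL-Analysis.Analysis"
begin

definition completely_monotonic :: "(real \<Rightarrow> real) \<Rightarrow> bool" where
  "completely_monotonic g \<longleftrightarrow>
     (\<forall>k::nat. \<forall>x>0. ((deriv ^^ k) g) differentiable (at x)) \<and>
     (\<forall>k::nat. \<forall>x>0. (-1) ^ k * (deriv ^^ k) g x \<ge> 0)"

end

theory Submission
  imports Defs
begin

(* Differentiating termwise, (-1)^k Theta^(k)(t) = Re M_k(t) with M_k(t) = sum_n lam_n^k exp (- lam_n t),
   so complete monotonicity says Re M_k >= 0 on (0, infinity) for every k, which is clear for real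
   positive lam_n. Conversely, let lam_m be non-real, s = 1 / Re lam_m and w_n = lam_n exp (- lam_n s), so
   that M_k(k s + tau) = sum_n w_n^k exp (- lam_n tau). The moduli |w_n| tend to 0, so their maximum is
   attained at finitely many n, none of which is real because x exp (- x s) <= exp (-1) / s < |w_m| for
   x > 0. Among the maximisers, those of least real part carry a conjugate pair nu, cnj nu, and for large k
   these terms dominate Re M_k(k s + tau); choosing tau so that nu^k exp (- nu (k s + tau)) is a negative
   real number makes Re M_k(k s + tau) < 0. *)

lemma power_div_fact_le_exp:
  fixes y :: real
  assumes "0 \<le> y"
  shows "y ^ n / fact n \<le> exp y"
proof -
  have "summable (\<lambda>i. y ^ i / fact i)"
    using summable_exp[of y] by (simp add: divide_inverse mult.commute)
  then have "(\<Sum>i\<in>{n}. y ^ i / fact i) \<le> (\<Sum>i. y ^ i / fact i)"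
    by (rule sum_le_suminf) (use assms in auto)
  also have "\<dots> = exp y"
    by (simp add: exp_def divide_inverse mult.commute scaleR_conv_of_real)
  finally show ?thesis by simp
qed

lemma power_mult_exp_le:
  fixes x c :: real
  assumes "0 < x" and "0 < c"
  shows "x ^ k * exp (- c * x) \<le> fact (Suc k) / c ^ Suc k / x"
proof -
  have "(c * x) ^ Suc k \<le> fact (Suc k) * exp (c * x)"
    using power_div_fact_le_exp[of "c * x" "Suc k"] assms by (simp add: divide_le_eq mult.commute)
  then have "c ^ Suc k * x ^ Suc k * exp (- c * x) \<le> fact (Suc k) * exp (c * x) * exp (- c * x)"
    by (intro mult_right_mono) (simp_all add: power_mult_distrib mult_ac)
  then have "x ^ Suc k * exp (- c * x) \<le> fact (Suc k) / c ^ Suc k"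
    using assms by (simp add: pos_le_divide_eq exp_minus mult.commute mult.left_commute)
  then show ?thesis
    using assms by (simp add: field_simps)
qed

lemma mult_exp_le:
  fixes x c :: real
  assumes "0 < c"
  shows "x * exp (- x / c) \<le> c * exp (- 1)"
proof -
  define y where "y = x / c"
  have "y \<le> exp (y - 1)"
    using exp_ge_add_one_self[of "y - 1"] by simp
  then have "y * exp (- y) \<le> exp (- 1)"
    by (simp add: exp_diff exp_minus field_simps)
  then have "c * (y * exp (- y)) \<le> c * exp (- 1)"
    using assms by (intro mult_left_mono) auto
  then show ?thesis
    using assms by (simp add: y_def)
qed

lemma exists_power_lt_power_mult:
  fixes a b c d :: real
  assumes "0 < a" and "a < b" and "0 \<le> c" and "0 < d"
  shows "\<exists>k\<ge>1. a ^ (k - 1) * c < b ^ k * d"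
proof -
  have "(\<lambda>k. (a / b) ^ k) \<longlonglongrightarrow> 0"
    using assms by (intro LIMSEQ_power_zero) simp
  then have "eventually (\<lambda>k. (a / b) ^ k < a * d / (c + 1)) sequentially"
    using assms by (intro order_tendstoD(2)) (auto intro!: divide_pos_pos)
  then obtain N where N: "\<And>k. N \<le> k \<Longrightarrow> (a / b) ^ k < a * d / (c + 1)"
    by (auto simp: eventually_sequentially)
  define k where "k = Suc N"
  have "1 \<le> k" and small: "(a / b) ^ k < a * d / (c + 1)"
    using N[of k] by (simp_all add: k_def)
  have "a ^ (k - 1) = a ^ k / a"
    using assms \<open>1 \<le> k\<close> by (simp add: power_diff)
  then have "a ^ (k - 1) * c = (a / b) ^ k * c * b ^ k / a"
    using assms by (simp add: power_divide)
  also have "\<dots> \<le> (a / b) ^ k * (c + 1) * b ^ k / a"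
    using assms by (intro divide_right_mono mult_right_mono mult_left_mono) auto
  also have "\<dots> < a * d / (c + 1) * (c + 1) * b ^ k / a"
    using assms small by (intro divide_strict_right_mono mult_strict_right_mono) auto
  also have "\<dots> = b ^ k * d"
    using assms by (simp add: add_nonneg_pos)
  finally show ?thesis
    using \<open>1 \<le> k\<close> by blast
qed

lemma exists_cos_eq_minus_one:
  fixes b \<alpha> \<tau>\<^sub>1 :: real
  assumes b: "0 < b"
  shows "\<exists>\<tau>. \<tau>\<^sub>1 \<le> \<tau> \<and> \<tau> \<le> \<tau>\<^sub>1 + 2 * pi / b \<and> cos (\<alpha> - b * \<tau>) = - 1"
proof -
  define j where "j = \<lfloor>(\<alpha> - pi - b * \<tau>\<^sub>1) / (2 * pi)\<rfloor>"
  define \<tau> where "\<tau> = (\<alpha> - pi - 2 * pi * of_int j) / b"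
  have "of_int j \<le> (\<alpha> - pi - b * \<tau>\<^sub>1) / (2 * pi)" and "(\<alpha> - pi - b * \<tau>\<^sub>1) / (2 * pi) < of_int j + 1"
    unfolding j_def by linarith+
  then have "b * \<tau>\<^sub>1 \<le> \<alpha> - pi - 2 * pi * of_int j" and "\<alpha> - pi - 2 * pi * of_int j \<le> b * \<tau>\<^sub>1 + 2 * pi"
    using pi_gt_zero by (simp_all add: field_simps)
  then have "\<tau>\<^sub>1 \<le> \<tau>"
    using b by (simp add: \<tau>_def pos_le_divide_eq mult.commute)
  have "\<tau> \<le> (b * \<tau>\<^sub>1 + 2 * pi) / b"
    unfolding \<tau>_def using b \<open>\<alpha> - pi - 2 * pi * of_int j \<le> b * \<tau>\<^sub>1 + 2 * pi\<close>
    by (intro divide_right_mono) auto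
  then have "\<tau> \<le> \<tau>\<^sub>1 + 2 * pi / b"
    using b by (simp add: field_simps)
  have "\<alpha> - b * \<tau> = pi + of_int j * (2 * pi)"
    using b by (simp add: \<tau>_def field_simps)
  then have "cos (\<alpha> - b * \<tau>) = - 1"
    using cos.plus_of_int[of pi j] by simp
  then show ?thesis
    using \<open>\<tau>\<^sub>1 \<le> \<tau>\<close> \<open>\<tau> \<le> \<tau>\<^sub>1 + 2 * pi / b\<close> by blast
qed

lemma Re_mult_exp_polar:
  "Re (c * exp (- \<nu> * complex_of_real \<tau>)) = cmod c * exp (- Re \<nu> * \<tau>) * cos (Arg c - Im \<nu> * \<tau>)"
proof -
  have "exp (- \<nu> * of_real \<tau>) = rcis (exp (- Re \<nu> * \<tau>)) (- Im \<nu> * \<tau>)"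
    by (simp add: rcis_def exp_eq_polar)
  then have "c * exp (- \<nu> * of_real \<tau>) = rcis (cmod c) (Arg c) * rcis (exp (- Re \<nu> * \<tau>)) (- Im \<nu> * \<tau>)"
    by (simp add: rcis_cmod_Arg)
  also have "\<dots> = rcis (cmod c * exp (- Re \<nu> * \<tau>)) (Arg c - Im \<nu> * \<tau>)"
    by (simp add: rcis_mult)
  finally show ?thesis by simp
qed

lemma exists_Re_mult_exp_eq_neg_norm:
  assumes "0 < Im \<nu>"
  shows "\<exists>\<tau>. \<tau>\<^sub>1 \<le> \<tau> \<and> \<tau> \<le> \<tau>\<^sub>1 + 2 * pi / Im \<nu> \<and>
           Re (c * exp (- \<nu> * complex_of_real \<tau>)) = - (cmod c * exp (- Re \<nu> * \<tau>))"
proof -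
  obtain \<tau> where "\<tau>\<^sub>1 \<le> \<tau>" "\<tau> \<le> \<tau>\<^sub>1 + 2 * pi / Im \<nu>" "cos (Arg c - Im \<nu> * \<tau>) = - 1"
    using exists_cos_eq_minus_one[OF assms] by blast
  then show ?thesis
    by (intro exI[of _ \<tau>]) (simp only: Re_mult_exp_polar, simp)
qed

lemma power_mult_exp_shift:
  fixes w :: complex
  shows "w ^ k * exp (- w * of_real (real k * s + \<tau>)) = (w * exp (- w * of_real s)) ^ k * exp (- w * of_real \<tau>)"
proof -
  have "exp (- w * of_real (real k * s + \<tau>)) = exp (of_nat k * (- w * of_real s) + - w * of_real \<tau>)"
    by (simp add: algebra_simps)
  also have "\<dots> = exp (- w * of_real s) ^ k * exp (- w * of_real \<tau>)"
    by (simp only: exp_add exp_of_nat_mult)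
  finally show ?thesis
    by (simp add: power_mult_distrib)
qed

lemma eq_or_eq_cnj_if_norm_Re_eq:
  fixes w z :: complex
  assumes "cmod w = cmod z" and "Re w = Re z"
  shows "w = z \<or> w = cnj z"
proof -
  have "Im w ^ 2 = Im z ^ 2"
    using assms cmod_power2[of w] cmod_power2[of z] by simp
  then have "Im w = Im z \<or> Im w = - Im z"
    by (simp add: power2_eq_iff)
  then show ?thesis
    using assms by (auto simp: complex_eq_iff)
qed

lemma finite_ge_if_tendsto_zero:
  fixes q :: "nat \<Rightarrow> real"
  assumes "q \<longlonglongrightarrow> 0" and "0 < c"
  shows "finite {n. c \<le> q n}"
proof -
  obtain N where "\<And>n. N \<le> n \<Longrightarrow> q n < c"
    using order_tendstoD(2)[OF assms] by (auto simp: eventually_sequentially)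
  then have "{n. c \<le> q n} \<subseteq> {..<N}"
    by (force simp: not_less[symmetric])
  then show ?thesis
    using finite_subset by blast
qed

lemma positive_null_sequence_max_gap:
  fixes q :: "nat \<Rightarrow> real"
  assumes pos: "\<And>n. 0 < q n" and lim: "q \<longlonglongrightarrow> 0"
  obtains Q Q' where "\<And>n. q n \<le> Q" and "finite {n. q n = Q}" and "{n. q n = Q} \<noteq> {}"
    and "0 < Q'" and "Q' < Q" and "\<And>n. q n \<noteq> Q \<Longrightarrow> q n \<le> Q'"
proof -
  define A where "A = {n. q 0 \<le> q n}"
  have "finite A"
    unfolding A_def using lim pos by (rule finite_ge_if_tendsto_zero)
  define Q where "Q = Max (q ` A)"
  have "0 \<in> A"
    by (simp add: A_def)
  then have "Q \<in> q ` A"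
    unfolding Q_def using \<open>finite A\<close> by (intro Max_in) auto
  have le_Q: "q n \<le> Q" for n
  proof (cases "n \<in> A")
    case False
    then have "q n \<le> q 0"
      by (simp add: A_def)
    also have "q 0 \<le> Q"
      unfolding Q_def using \<open>finite A\<close> \<open>0 \<in> A\<close> by simp
    finally show ?thesis .
  qed (simp add: Q_def \<open>finite A\<close>)
  have "0 < Q"
    using pos[of 0] le_Q[of 0] by linarith
  have "finite {n. q n = Q}"
    using finite_ge_if_tendsto_zero[OF lim \<open>0 < Q\<close>] by (rule finite_subset[rotated]) auto
  define B where "B = {n. Q / 2 \<le> q n \<and> q n \<noteq> Q}"
  have "finite {n. Q / 2 \<le> q n}"
    using finite_ge_if_tendsto_zero[OF lim, of "Q / 2"] \<open>0 < Q\<close> by simp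
  then have "finite B"
    by (rule finite_subset[rotated]) (auto simp: B_def)
  define Q' where "Q' = Max (insert (Q / 2) (q ` B))"
  have "Q / 2 \<le> Q'"
    unfolding Q'_def using \<open>finite B\<close> by (intro Max_ge) auto
  then have "0 < Q'"
    using \<open>0 < Q\<close> by linarith
  have "Q' < Q"
  proof -
    have "\<forall>x\<in>insert (Q / 2) (q ` B). x < Q"
      using le_Q \<open>0 < Q\<close> by (auto simp: B_def less_le)
    then show ?thesis
      unfolding Q'_def using \<open>finite B\<close> by (subst Max_less_iff) auto
  qed
  have gap: "q n \<le> Q'" if "q n \<noteq> Q" for n
  proof (cases "Q / 2 \<le> q n")
    case True
    then have "n \<in> B"
      using that by (simp add: B_def)
    then show ?thesis
      unfolding Q'_def using \<open>finite B\<close> by (intro Max_ge) auto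
  qed (use \<open>Q / 2 \<le> Q'\<close> in linarith)
  have "{n. q n = Q} \<noteq> {}"
    using \<open>Q \<in> q ` A\<close> by auto
  show ?thesis
    by (rule that[OF le_Q \<open>finite {n. q n = Q}\<close> \<open>{n. q n = Q} \<noteq> {}\<close> \<open>0 < Q'\<close> \<open>Q' < Q\<close> gap])
qed

lemma Re_suminf_le_sum_plus_suminf:
  fixes z :: "nat \<Rightarrow> complex" and p :: "nat \<Rightarrow> real"
  assumes T: "finite T" and p: "summable p" "\<And>n. 0 \<le> p n"
    and bound: "\<And>n. n \<notin> T \<Longrightarrow> cmod (z n) \<le> p n"
  shows "Re (suminf z) \<le> (\<Sum>n\<in>T. Re (z n)) + suminf p"
proof -
  define h where "h n = (if n \<in> T then 0 else z n)" for n
  have "norm (h n) \<le> p n" for n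
    using bound p(2) by (simp add: h_def)
  then have h: "summable (\<lambda>n. norm (h n))"
    by (intro summable_comparison_test'[OF p(1)]) simp
  have fin: "summable (\<lambda>n. if n \<in> T then z n else 0)"
    using T by (rule summable_finite) simp
  have z_split: "z = (\<lambda>n. (if n \<in> T then z n else 0) + h n)"
    by (auto simp: h_def)
  have "suminf z = (\<Sum>n\<in>T. z n) + suminf h"
    by (subst z_split, subst suminf_add[OF fin summable_norm_cancel[OF h], symmetric])
       (simp add: suminf_finite[OF T])
  moreover have "Re (suminf h) \<le> suminf p"
  proof -
    have "Re (suminf h) \<le> (\<Sum>n. norm (h n))"
      using complex_Re_le_cmod summable_norm[OF h] order_trans by blast
    also have "\<dots> \<le> suminf p"
      using \<open>\<And>n. norm (h n) \<le> p n\<close> h p(1) by (rule suminf_le)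
    finally show ?thesis .
  qed
  ultimately show ?thesis
    by simp
qed

locale sector_exponents =
  fixes lam :: "nat \<Rightarrow> complex" and \<beta> :: real
  assumes beta_pos: "0 < \<beta>"
    and lam_nonzero: "\<And>n. lam n \<noteq> 0"
    and sector: "\<And>n. \<beta> * cmod (lam n) \<le> Re (lam n)"
    and summable_inverse_norm: "summable (\<lambda>n. 1 / cmod (lam n))"
begin

lemma norm_lam_pos: "0 < cmod (lam n)"
  using lam_nonzero by simp

lemma Re_lam_pos: "0 < Re (lam n)"
  using sector[of n] beta_pos norm_lam_pos[of n] by (meson mult_pos_pos order_less_le_trans)

lemma summable_norm_power_mult_exp:
  assumes "0 < c"
  shows "summable (\<lambda>n. cmod (lam n) ^ k * exp (- c * cmod (lam n)))"
proof (rule summable_comparison_test)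
  show "summable (\<lambda>n. fact (Suc k) / c ^ Suc k * (1 / cmod (lam n)))"
    by (intro summable_mult summable_inverse_norm)
  show "\<exists>N. \<forall>n\<ge>N. norm (cmod (lam n) ^ k * exp (- c * cmod (lam n)))
          \<le> fact (Suc k) / c ^ Suc k * (1 / cmod (lam n))"
    using power_mult_exp_le[OF norm_lam_pos assms] by simp
qed

lemma norm_moment_term_le:
  assumes x: "0 < x" and z: "z \<in> ball (complex_of_real x) (\<beta> * x / 2)"
  shows "cmod (lam n ^ k * exp (- lam n * z)) \<le> cmod (lam n) ^ k * exp (- (\<beta> * x / 2) * cmod (lam n))"
proof -
  have "\<bar>Re (lam n * (z - of_real x))\<bar> \<le> cmod (lam n) * cmod (z - of_real x)"
    using abs_Re_le_cmod[of "lam n * (z - of_real x)"] by (simp add: norm_mult)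
  also have "\<dots> \<le> cmod (lam n) * (\<beta> * x / 2)"
    using z by (intro mult_left_mono) (auto simp: dist_norm norm_minus_commute)
  finally have "\<bar>Re (lam n * (z - of_real x))\<bar> \<le> (\<beta> * x / 2) * cmod (lam n)"
    by (simp add: mult.commute)
  moreover have "\<beta> * cmod (lam n) * x \<le> Re (lam n) * x"
    using sector[of n] x by (intro mult_right_mono) auto
  moreover have "Re (lam n * z) = Re (lam n) * x + Re (lam n * (z - of_real x))"
    by (simp add: algebra_simps)
  moreover have "\<beta> * cmod (lam n) * x = 2 * ((\<beta> * x / 2) * cmod (lam n))"
    by simp
  ultimately have "(\<beta> * x / 2) * cmod (lam n) \<le> Re (lam n * z)"
    unfolding abs_le_iff by linarith
  then show ?thesis
    by (simp add: norm_mult norm_power mult_left_mono)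
qed

lemma summable_norm_moment_term:
  assumes "0 < x"
  shows "summable (\<lambda>n. cmod (lam n ^ k * exp (- lam n * of_real x)))"
proof (rule summable_comparison_test)
  show "summable (\<lambda>n. cmod (lam n) ^ k * exp (- (\<beta> * x / 2) * cmod (lam n)))"
    using assms beta_pos by (intro summable_norm_power_mult_exp) simp
  show "\<exists>N. \<forall>n\<ge>N. norm (cmod (lam n ^ k * exp (- lam n * of_real x)))
          \<le> cmod (lam n) ^ k * exp (- (\<beta> * x / 2) * cmod (lam n))"
    using norm_moment_term_le[OF assms] assms beta_pos by simp
qed

definition moment :: "nat \<Rightarrow> complex \<Rightarrow> complex" where
  "moment k z = (\<Sum>n. lam n ^ k * exp (- lam n * z))"

lemma has_field_derivative_moment:
  assumes x: "0 < x"
  shows "(moment k has_field_derivative - moment (Suc k) (of_real x)) (at (of_real x))"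
proof -
  define S where "S = ball (complex_of_real x) (\<beta> * x / 2)"
  have "0 < \<beta> * x / 2"
    using beta_pos x by simp
  then have x_S: "of_real x \<in> S" and x_interior: "of_real x \<in> interior S"
    by (simp_all add: S_def)
  have term_deriv: "((\<lambda>z. lam n ^ k * exp (- lam n * z)) has_field_derivative
      - (lam n ^ Suc k * exp (- lam n * z))) (at z within S)" for n z
    by (auto intro!: derivative_eq_intros simp: algebra_simps)
  have uniform: "uniformly_convergent_on S (\<lambda>N z. \<Sum>n<N. - (lam n ^ Suc k * exp (- lam n * z)))"
    unfolding uniformly_convergent_on_def
  proof (rule exI, rule Weierstrass_m_test)
    show "summable (\<lambda>n. cmod (lam n) ^ Suc k * exp (- (\<beta> * x / 2) * cmod (lam n)))"
      using \<open>0 < \<beta> * x / 2\<close> by (rule summable_norm_power_mult_exp)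
    fix n z
    assume "z \<in> S"
    then show "norm (- (lam n ^ Suc k * exp (- lam n * z)))
        \<le> cmod (lam n) ^ Suc k * exp (- (\<beta> * x / 2) * cmod (lam n))"
      unfolding norm_minus_cancel S_def by (rule norm_moment_term_le[OF x])
  qed
  have "(moment k has_field_derivative (\<Sum>n. - (lam n ^ Suc k * exp (- lam n * of_real x)))) (at (of_real x))"
    unfolding moment_def[abs_def]
    by (rule has_field_derivative_series'(2)[OF _ term_deriv uniform x_S
          summable_norm_cancel[OF summable_norm_moment_term[OF x]] x_interior])
       (simp add: S_def)
  also have "(\<Sum>n. - (lam n ^ Suc k * exp (- lam n * of_real x))) = - moment (Suc k) (of_real x)"
    unfolding moment_def by (rule suminf_minus[OF summable_norm_cancel[OF summable_norm_moment_term[OF x]]])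
  finally show ?thesis .
qed

lemma has_real_derivative_signed_Re_moment:
  assumes "0 < x"
  shows "((\<lambda>t. (-1) ^ k * Re (moment k (of_real t))) has_real_derivative
           (-1) ^ Suc k * Re (moment (Suc k) (of_real x))) (at x)"
proof -
  have "((\<lambda>t. moment k (of_real t)) has_vector_derivative - moment (Suc k) (of_real x)) (at x)"
    by (rule has_vector_derivative_real_field[OF has_field_derivative_moment[OF assms]])
  from bounded_linear.has_vector_derivative[OF bounded_linear_Re this]
  have "((\<lambda>t. Re (moment k (of_real t))) has_real_derivative - Re (moment (Suc k) (of_real x))) (at x)"
    by (simp add: has_real_derivative_iff_has_vector_derivative)
  from DERIV_cmult[OF this, of "(-1) ^ k"] show ?thesis
    by simp
qed

lemma higher_deriv_Re_moment:
  assumes "0 < x"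
  shows "(deriv ^^ k) (\<lambda>t. Re (moment 0 (of_real t))) x = (-1) ^ k * Re (moment k (of_real x))"
  using assms
proof (induction k arbitrary: x)
  case (Suc k)
  have "((deriv ^^ k) (\<lambda>t. Re (moment 0 (of_real t))) has_real_derivative
          (-1) ^ Suc k * Re (moment (Suc k) (of_real x))) (at x)"
    by (rule has_field_derivative_transform_within_open[OF has_real_derivative_signed_Re_moment[OF Suc.prems],
          where S = "{0<..}"]) (use Suc in auto)
  then show ?case
    by (simp add: DERIV_imp_deriv)
qed simp

lemma completely_monotonic_iff_Re_moments_nonneg:
  "completely_monotonic (\<lambda>t. Re (moment 0 (of_real t))) \<longleftrightarrow> (\<forall>k. \<forall>x>0. 0 \<le> Re (moment k (of_real x)))"
proof -
  have "((deriv ^^ k) (\<lambda>t. Re (moment 0 (of_real t)))) differentiable (at x)" if "0 < x" for k x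
    using has_field_derivative_transform_within_open[OF has_real_derivative_signed_Re_moment[OF that],
        where S = "{0<..}" and g = "(deriv ^^ k) (\<lambda>t. Re (moment 0 (of_real t)))"]
      that higher_deriv_Re_moment
    by (auto simp: real_differentiable_def)
  moreover have "(-1) ^ k * (deriv ^^ k) (\<lambda>t. Re (moment 0 (of_real t))) x = Re (moment k (of_real x))"
    if "0 < x" for k x
    using higher_deriv_Re_moment[OF that] by (simp flip: power_add)
  ultimately show ?thesis
    unfolding completely_monotonic_def by auto
qed

lemma moment_real_nonneg_if_lam_real:
  assumes real: "\<And>n. Im (lam n) = 0" and x: "0 < x"
  shows "Im (moment k (of_real x)) = 0" and "0 \<le> Re (moment k (of_real x))"
proof -
  have real_term: "lam n ^ k * exp (- lam n * of_real x) = of_real (Re (lam n) ^ k * exp (- Re (lam n) * x))" for n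
  proof -
    have "lam n = of_real (Re (lam n))"
      using real[of n] by (simp add: complex_eq_iff)
    then show ?thesis
      by (metis exp_of_real of_real_minus of_real_mult of_real_power)
  qed
  moreover have summable: "summable (\<lambda>n. lam n ^ k * exp (- lam n * of_real x))"
    using summable_norm_cancel[OF summable_norm_moment_term[OF x]] .
  ultimately show "Im (moment k (of_real x)) = 0"
    unfolding moment_def by (simp add: Im_suminf)
  have "0 \<le> (\<Sum>n. Re (lam n ^ k * exp (- lam n * of_real x)))"
    by (rule suminf_nonneg[OF summable_Re[OF summable]])
       (simp only: real_term Re_complex_of_real, simp add: Re_lam_pos less_imp_le)
  then show "0 \<le> Re (moment k (of_real x))"
    unfolding moment_def Re_suminf[OF summable] .
qed

definition weight :: "real \<Rightarrow> nat \<Rightarrow> real" where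
  "weight s n = cmod (lam n) * exp (- Re (lam n) * s)"

lemma weight_pos: "0 < weight s n"
  by (simp add: weight_def lam_nonzero)

lemma summable_weight:
  assumes "0 < s"
  shows "summable (weight s)"
proof (rule summable_comparison_test)
  show "summable (\<lambda>n. cmod (lam n) ^ 1 * exp (- (\<beta> * s) * cmod (lam n)))"
    using assms beta_pos by (intro summable_norm_power_mult_exp) simp
  have "- Re (lam n) * s \<le> - (\<beta> * s) * cmod (lam n)" for n
    using mult_right_mono[OF sector[of n], of s] assms by (simp add: algebra_simps)
  then show "\<exists>N. \<forall>n\<ge>N. norm (weight s n) \<le> cmod (lam n) ^ 1 * exp (- (\<beta> * s) * cmod (lam n))"
    using weight_pos by (simp add: weight_def abs_of_pos mult_left_mono)
qed

lemma weight_lt_if_real: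
  assumes "Im (lam n) = 0" and "Im (lam m) \<noteq> 0"
  shows "weight (1 / Re (lam m)) n < weight (1 / Re (lam m)) m"
proof -
  have "weight (1 / Re (lam m)) n = Re (lam n) * exp (- Re (lam n) / Re (lam m))"
    using assms(1) Re_lam_pos[of n] by (simp add: weight_def cmod_eq_Re)
  also have "\<dots> \<le> Re (lam m) * exp (- 1)"
    by (rule mult_exp_le[OF Re_lam_pos])
  also have "\<dots> < cmod (lam m) * exp (- 1)"
  proof -
    have "Re (lam m) ^ 2 < cmod (lam m) ^ 2"
      using assms(2) cmod_power2[of "lam m"] by simp
    then show ?thesis
      using norm_lam_pos[of m] by (simp add: power_less_imp_less_base)
  qed
  also have "\<dots> = weight (1 / Re (lam m)) m"
    using Re_lam_pos[of m] by (simp add: weight_def)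
  finally show ?thesis .
qed

lemma norm_moment_term_shift:
  "cmod (lam n ^ k * exp (- lam n * of_real (real k * s + \<tau>))) = weight s n ^ k * exp (- Re (lam n) * \<tau>)"
  unfolding power_mult_exp_shift by (simp add: norm_mult norm_power weight_def)

end

(* T is the set of indices of maximal weight, and nu, cnj nu are the exponents in T of least real part. *)
locale dominant_pair = sector_exponents +
  fixes s :: real and T :: "nat set" and Q' :: real and \<nu> :: complex
  assumes s_pos: "0 < s"
    and finite_T: "finite T"
    and weight_T: "\<And>n. n \<in> T \<Longrightarrow> weight s n = cmod \<nu> * exp (- Re \<nu> * s)"
    and weight_not_T: "\<And>n. n \<notin> T \<Longrightarrow> weight s n \<le> Q'"
    and gap: "0 < Q'" "Q' < cmod \<nu> * exp (- Re \<nu> * s)"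
    and Re_T_ge: "\<And>n. n \<in> T \<Longrightarrow> Re \<nu> \<le> Re (lam n)"
    and Re_T_attained: "\<exists>n\<in>T. Re (lam n) = Re \<nu>"
    and Im_pos: "0 < Im \<nu>"
begin

abbreviation peak_weight :: real where
  "peak_weight \<equiv> cmod \<nu> * exp (- Re \<nu> * s)"

lemma Re_nu_pos: "0 < Re \<nu>"
  using Re_T_attained Re_lam_pos by metis

lemma lam_eq_pair:
  assumes "n \<in> T" and "Re (lam n) = Re \<nu>"
  shows "lam n = \<nu> \<or> lam n = cnj \<nu>"
proof (rule eq_or_eq_cnj_if_norm_Re_eq)
  show "cmod (lam n) = cmod \<nu>"
    using weight_T[OF assms(1)] assms(2) by (simp add: weight_def)
qed (rule assms(2))

lemma Re_moment_term_pair: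
  assumes "n \<in> T" and "Re (lam n) = Re \<nu>"
  shows "Re (lam n ^ k * exp (- lam n * of_real t)) = Re (\<nu> ^ k * exp (- \<nu> * of_real t))"
proof (cases "lam n = \<nu>")
  case False
  then have "lam n ^ k * exp (- lam n * of_real t) = cnj (\<nu> ^ k * exp (- \<nu> * of_real t))"
    using lam_eq_pair[OF assms] by (simp add: exp_cnj)
  then show ?thesis
    by (simp only: cnj.sel)
qed simp

lemma eventually_sum_exp_decay:
  "eventually (\<lambda>\<tau>. (\<Sum>n\<in>{n\<in>T. Re \<nu> < Re (lam n)}. exp (- (Re (lam n) - Re \<nu>) * \<tau>)) < 1 / 2) at_top"
proof (rule order_tendstoD(2))
  have "((\<lambda>\<tau>. exp (- (Re (lam n) - Re \<nu>) * \<tau>)) \<longlongrightarrow> 0) at_top" if "Re \<nu> < Re (lam n)" for n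
    by (intro filterlim_compose[OF exp_at_bot] filterlim_tendsto_neg_mult_at_bot[OF tendsto_const] filterlim_ident)
       (use that in auto)
  then show "((\<lambda>\<tau>. \<Sum>n\<in>{n\<in>T. Re \<nu> < Re (lam n)}. exp (- (Re (lam n) - Re \<nu>) * \<tau>)) \<longlongrightarrow> 0) at_top"
    using tendsto_sum[of "{n\<in>T. Re \<nu> < Re (lam n)}" "\<lambda>n \<tau>. exp (- (Re (lam n) - Re \<nu>) * \<tau>)" "\<lambda>_. 0"]
    by simp
qed simp

lemma Re_moment_shift_le:
  assumes k: "1 \<le> k" and \<tau>: "0 \<le> \<tau>"
  defines "t \<equiv> real k * s + \<tau>"
  shows "Re (moment k (of_real t))
    \<le> real (card {n\<in>T. Re (lam n) = Re \<nu>}) * Re (\<nu> ^ k * exp (- \<nu> * of_real t))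
      + peak_weight ^ k * exp (- Re \<nu> * \<tau>) * (\<Sum>n\<in>{n\<in>T. Re \<nu> < Re (lam n)}. exp (- (Re (lam n) - Re \<nu>) * \<tau>))
      + Q' ^ (k - 1) * suminf (weight s)"
proof -
  define z where "z n = lam n ^ k * exp (- lam n * of_real t)" for n
  define T\<^sub>0 where "T\<^sub>0 = {n\<in>T. Re (lam n) = Re \<nu>}"
  define T\<^sub>1 where "T\<^sub>1 = {n\<in>T. Re \<nu> < Re (lam n)}"
  have norm_z: "cmod (z n) = weight s n ^ k * exp (- Re (lam n) * \<tau>)" for n
    unfolding z_def t_def by (rule norm_moment_term_shift)
  have tail: "cmod (z n) \<le> Q' ^ (k - 1) * weight s n" if "n \<notin> T" for n
  proof -
    have "cmod (z n) \<le> weight s n ^ k"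
      using norm_z[of n] weight_pos[of s n] Re_lam_pos[of n] \<tau>
      by (simp add: mult_left_le mult_nonneg_nonneg)
    also have "\<dots> = weight s n ^ (k - 1) * weight s n"
      using k power_minus_mult[of k "weight s n"] by simp
    also have "\<dots> \<le> Q' ^ (k - 1) * weight s n"
      using weight_not_T[OF that] weight_pos[of s n] by (intro mult_right_mono power_mono) auto
    finally show ?thesis .
  qed
  have "Re (suminf z) \<le> (\<Sum>n\<in>T. Re (z n)) + (\<Sum>n. Q' ^ (k - 1) * weight s n)"
    using gap(1) weight_pos
    by (intro Re_suminf_le_sum_plus_suminf[OF finite_T summable_mult[OF summable_weight[OF s_pos]] _ tail])
       (auto intro: less_imp_le)
  also have "(\<Sum>n. Q' ^ (k - 1) * weight s n) = Q' ^ (k - 1) * suminf (weight s)"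
    by (rule suminf_mult[OF summable_weight[OF s_pos]])
  also have "(\<Sum>n\<in>T. Re (z n)) = (\<Sum>n\<in>T\<^sub>0. Re (z n)) + (\<Sum>n\<in>T\<^sub>1. Re (z n))"
  proof -
    have "T = T\<^sub>0 \<union> T\<^sub>1" and "T\<^sub>0 \<inter> T\<^sub>1 = {}"
      using Re_T_ge by (force simp: T\<^sub>0_def T\<^sub>1_def)+
    then show ?thesis
      using finite_T by (simp add: sum.union_disjoint)
  qed
  also have "(\<Sum>n\<in>T\<^sub>0. Re (z n)) = real (card T\<^sub>0) * Re (\<nu> ^ k * exp (- \<nu> * of_real t))"
    using Re_moment_term_pair by (simp add: T\<^sub>0_def z_def)
  also have "(\<Sum>n\<in>T\<^sub>1. Re (z n))
      \<le> peak_weight ^ k * exp (- Re \<nu> * \<tau>) * (\<Sum>n\<in>T\<^sub>1. exp (- (Re (lam n) - Re \<nu>) * \<tau>))"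
  proof -
    have "Re (z n) \<le> peak_weight ^ k * exp (- Re \<nu> * \<tau>) * exp (- (Re (lam n) - Re \<nu>) * \<tau>)" if "n \<in> T\<^sub>1" for n
    proof -
      have "Re (z n) \<le> cmod (z n)"
        by (rule complex_Re_le_cmod)
      also have "\<dots> = peak_weight ^ k * exp (- Re \<nu> * \<tau>) * exp (- (Re (lam n) - Re \<nu>) * \<tau>)"
        using that weight_T by (simp add: norm_z T\<^sub>1_def mult.assoc flip: exp_add) (simp add: algebra_simps)
      finally show ?thesis .
    qed
    then show ?thesis
      by (simp add: sum_distrib_left sum_mono)
  qed
  finally show ?thesis
    by (simp add: moment_def z_def T\<^sub>0_def T\<^sub>1_def)
qed

lemma Re_moment_shift_neg:
  assumes "1 \<le> k" and "0 \<le> \<tau>"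
    and decay: "(\<Sum>n\<in>{n\<in>T. Re \<nu> < Re (lam n)}. exp (- (Re (lam n) - Re \<nu>) * \<tau>)) < 1 / 2"
    and phase: "Re (\<nu> ^ k * exp (- \<nu> * of_real (real k * s + \<tau>))) = - (peak_weight ^ k * exp (- Re \<nu> * \<tau>))"
    and tail: "Q' ^ (k - 1) * suminf (weight s) < peak_weight ^ k * exp (- Re \<nu> * \<tau>) / 2"
  shows "Re (moment k (of_real (real k * s + \<tau>))) < 0"
proof -
  define A where "A = peak_weight ^ k * exp (- Re \<nu> * \<tau>)"
  have "0 < A"
    using gap by (simp add: A_def)
  have "1 \<le> card {n\<in>T. Re (lam n) = Re \<nu>}"
    using Re_T_attained finite_T by (simp add: Suc_le_eq card_gt_0_iff) blast
  then have "real (card {n\<in>T. Re (lam n) = Re \<nu>}) * Re (\<nu> ^ k * exp (- \<nu> * of_real (real k * s + \<tau>))) \<le> - A"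
    using \<open>0 < A\<close> phase by (simp add: A_def mult_le_cancel_right1)
  moreover have "A * (\<Sum>n\<in>{n\<in>T. Re \<nu> < Re (lam n)}. exp (- (Re (lam n) - Re \<nu>) * \<tau>)) < A / 2"
    using decay \<open>0 < A\<close> by simp
  ultimately show ?thesis
    using Re_moment_shift_le[OF assms(1,2)] tail by (simp add: A_def)
qed

lemma exists_negative_moment: "\<exists>k t. 0 < t \<and> Re (moment k (of_real t)) < 0"
proof -
  obtain \<tau>\<^sub>0 where decay: "\<And>\<tau>. \<tau>\<^sub>0 \<le> \<tau> \<Longrightarrow>
      (\<Sum>n\<in>{n\<in>T. Re \<nu> < Re (lam n)}. exp (- (Re (lam n) - Re \<nu>) * \<tau>)) < 1 / 2"
    using eventually_sum_exp_decay by (auto simp: eventually_at_top_linorder)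
  define \<tau>\<^sub>1 where "\<tau>\<^sub>1 = max \<tau>\<^sub>0 0"
  (* The phase tau is chosen after k, but within a window of fixed length 2 pi / Im nu; so k can be
     fixed beforehand using the smallest value E of exp (- Re nu * tau) on that window. *)
  define E where "E = exp (- Re \<nu> * (\<tau>\<^sub>1 + 2 * pi / Im \<nu>))"
  have "0 \<le> suminf (weight s)"
    using summable_weight[OF s_pos] weight_pos by (intro suminf_nonneg) (auto intro: less_imp_le)
  moreover have "0 < E / 2"
    by (simp add: E_def)
  ultimately obtain k where "1 \<le> k" and k: "Q' ^ (k - 1) * suminf (weight s) < peak_weight ^ k * (E / 2)"
    using exists_power_lt_power_mult[OF gap] by blast
  define W where "W = \<nu> * exp (- \<nu> * of_real s)"
  obtain \<tau> where "\<tau>\<^sub>1 \<le> \<tau>" and "\<tau> \<le> \<tau>\<^sub>1 + 2 * pi / Im \<nu>"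
    and phase: "Re (W ^ k * exp (- \<nu> * of_real \<tau>)) = - (cmod (W ^ k) * exp (- Re \<nu> * \<tau>))"
    using exists_Re_mult_exp_eq_neg_norm[OF Im_pos] by blast
  have "0 \<le> \<tau>" and "\<tau>\<^sub>0 \<le> \<tau>"
    using \<open>\<tau>\<^sub>1 \<le> \<tau>\<close> by (simp_all add: \<tau>\<^sub>1_def)
  have "Re (\<nu> ^ k * exp (- \<nu> * of_real (real k * s + \<tau>))) = - (peak_weight ^ k * exp (- Re \<nu> * \<tau>))"
    unfolding power_mult_exp_shift W_def[symmetric] phase by (simp add: W_def norm_mult norm_power)
  moreover have "Q' ^ (k - 1) * suminf (weight s) < peak_weight ^ k * exp (- Re \<nu> * \<tau>) / 2"
  proof -
    have "E \<le> exp (- Re \<nu> * \<tau>)"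
      using \<open>\<tau> \<le> \<tau>\<^sub>1 + 2 * pi / Im \<nu>\<close> Re_nu_pos by (simp add: E_def)
    then have "peak_weight ^ k * (E / 2) \<le> peak_weight ^ k * exp (- Re \<nu> * \<tau>) / 2"
      using gap by simp
    then show ?thesis
      using k by linarith
  qed
  ultimately have "Re (moment k (of_real (real k * s + \<tau>))) < 0"
    using Re_moment_shift_neg[OF \<open>1 \<le> k\<close> \<open>0 \<le> \<tau>\<close> decay[OF \<open>\<tau>\<^sub>0 \<le> \<tau>\<close>]] by blast
  moreover have "0 < real k * s + \<tau>"
    using \<open>1 \<le> k\<close> s_pos \<open>0 \<le> \<tau>\<close> by (simp add: add_pos_nonneg)
  ultimately show ?thesis
    by blast
qed

end

context sector_exponents
begin

lemma exists_dominant_pair: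
  assumes "Im (lam m) \<noteq> 0"
  shows "\<exists>s T Q' \<nu>. dominant_pair lam \<beta> s T Q' \<nu>"
proof -
  define s where "s = 1 / Re (lam m)"
  have "0 < s"
    using Re_lam_pos by (simp add: s_def)
  obtain Q Q' where le_Q: "\<And>n. weight s n \<le> Q" and "finite {n. weight s n = Q}"
    and "{n. weight s n = Q} \<noteq> {}" and gap: "0 < Q'" "Q' < Q"
    and below_gap: "\<And>n. weight s n \<noteq> Q \<Longrightarrow> weight s n \<le> Q'"
    using positive_null_sequence_max_gap[OF weight_pos summable_LIMSEQ_zero[OF summable_weight[OF \<open>0 < s\<close>]]]
    by blast
  define T where "T = {n. weight s n = Q}"
  have "finite T" and "T \<noteq> {}"
    using \<open>finite {n. weight s n = Q}\<close> \<open>{n. weight s n = Q} \<noteq> {}\<close> by (simp_all add: T_def)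
  have nonreal: "Im (lam n) \<noteq> 0" if "n \<in> T" for n
    using weight_lt_if_real[OF _ assms, of n] le_Q[of m] that by (auto simp: T_def s_def)
  define r\<^sub>0 where "r\<^sub>0 = Min ((\<lambda>n. Re (lam n)) ` T)"
  have "r\<^sub>0 \<in> (\<lambda>n. Re (lam n)) ` T"
    unfolding r\<^sub>0_def using \<open>finite T\<close> \<open>T \<noteq> {}\<close> by (intro Min_in) auto
  then obtain n\<^sub>0 where "n\<^sub>0 \<in> T" and "Re (lam n\<^sub>0) = r\<^sub>0"
    by blast
  define \<nu> where "\<nu> = (if 0 < Im (lam n\<^sub>0) then lam n\<^sub>0 else cnj (lam n\<^sub>0))"
  have "Re \<nu> = r\<^sub>0" and "cmod \<nu> = cmod (lam n\<^sub>0)" and "0 < Im \<nu>"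
    using \<open>Re (lam n\<^sub>0) = r\<^sub>0\<close> nonreal[OF \<open>n\<^sub>0 \<in> T\<close>] by (auto simp: \<nu>_def)
  have "dominant_pair lam \<beta> s T Q' \<nu>"
  proof (intro dominant_pair.intro sector_exponents_axioms dominant_pair_axioms.intro)
    show "weight s n = cmod \<nu> * exp (- Re \<nu> * s)" if "n \<in> T" for n
      using that \<open>n\<^sub>0 \<in> T\<close> \<open>Re \<nu> = r\<^sub>0\<close> \<open>cmod \<nu> = cmod (lam n\<^sub>0)\<close> \<open>Re (lam n\<^sub>0) = r\<^sub>0\<close>
      by (simp add: T_def weight_def)
    show "Re \<nu> \<le> Re (lam n)" if "n \<in> T" for n
      unfolding \<open>Re \<nu> = r\<^sub>0\<close> r\<^sub>0_def using that \<open>finite T\<close> by simp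
    show "Q' < cmod \<nu> * exp (- Re \<nu> * s)"
      using gap \<open>n\<^sub>0 \<in> T\<close> \<open>Re \<nu> = r\<^sub>0\<close> \<open>cmod \<nu> = cmod (lam n\<^sub>0)\<close> \<open>Re (lam n\<^sub>0) = r\<^sub>0\<close>
      by (simp add: T_def weight_def)
  qed (use \<open>0 < s\<close> \<open>finite T\<close> below_gap gap \<open>n\<^sub>0 \<in> T\<close> \<open>Re (lam n\<^sub>0) = r\<^sub>0\<close>
      \<open>Re \<nu> = r\<^sub>0\<close> \<open>0 < Im \<nu>\<close> in \<open>auto simp: T_def\<close>)
  then show ?thesis
    by blast
qed

lemma Im_lam_eq_0_if_Re_moments_nonneg:
  assumes "\<And>k x. 0 < x \<Longrightarrow> 0 \<le> Re (moment k (of_real x))"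
  shows "Im (lam n) = 0"
proof (rule ccontr)
  assume "Im (lam n) \<noteq> 0"
  then obtain s T Q' \<nu> where "dominant_pair lam \<beta> s T Q' \<nu>"
    using exists_dominant_pair by blast
  then obtain k t where "0 < t" and "Re (moment k (of_real t)) < 0"
    using dominant_pair.exists_negative_moment by blast
  with assms[of t k] show False
    by linarith
qed

end

theorem lemma3:
  fixes f :: "complex \<Rightarrow> complex" and a :: "nat \<Rightarrow> real"
    and lam :: "nat \<Rightarrow> complex" and \<beta>\<^sub>0 :: real
  assumes entire: "f holomorphic_on UNIV"
    and series: "\<And>z. (\<lambda>n. complex_of_real (a n) * z ^ n) sums f z"
    and coeff_sign: "\<And>n. a 0 * a n > 0"
    and order: "limsup (\<lambda>n. ereal (real n * ln (real n) / (- ln \<bar>a n\<bar>))) < 1"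
    and root: "\<exists>z. z \<noteq> 0 \<and> f z = 0"
    and prod: "\<And>z. (\<lambda>n. 1 + z / lam n) has_prod (f z / f 0)"
    and summ: "summable (\<lambda>n. 1 / cmod (lam n))"
    and beta: "0 < \<beta>\<^sub>0" "\<beta>\<^sub>0 < 1"
    and sector: "\<And>n. Re (lam n) \<ge> \<beta>\<^sub>0 * cmod (lam n) \<and> \<beta>\<^sub>0 * cmod (lam n) > 0"
  shows "(\<forall>n. Im (lam n) = 0 \<and> Re (lam n) > 0) \<longleftrightarrow>
         ((\<forall>t>0. Im (\<Sum>n. exp (- lam n * complex_of_real t)) = 0) \<and>
          completely_monotonic (\<lambda>t. Re (\<Sum>n. exp (- lam n * complex_of_real t))))"
proof -
  have "lam n \<noteq> 0" for n
    using sector[of n] by auto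
  interpret sector_exponents lam \<beta>\<^sub>0
    using beta(1) sector summ \<open>\<And>n. lam n \<noteq> 0\<close> by unfold_locales auto
  have theta: "(\<Sum>n. exp (- lam n * complex_of_real t)) = moment 0 (of_real t)" for t
    by (simp add: moment_def)
  show ?thesis
    unfolding theta completely_monotonic_iff_Re_moments_nonneg
  proof
    assume "\<forall>n. Im (lam n) = 0 \<and> 0 < Re (lam n)"
    then show "(\<forall>t>0. Im (moment 0 (of_real t)) = 0) \<and> (\<forall>k. \<forall>x>0. 0 \<le> Re (moment k (of_real x)))"
      using moment_real_nonneg_if_lam_real by blast
  next
    assume "(\<forall>t>0. Im (moment 0 (of_real t)) = 0) \<and> (\<forall>k. \<forall>x>0. 0 \<le> Re (moment k (of_real x)))"
    then show "\<forall>n. Im (lam n) = 0 \<and> 0 < Re (lam n)"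
      using Im_lam_eq_0_if_Re_moments_nonneg Re_lam_pos by blast
  qed
qed

end
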